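(* Let $f\in\mathbb{K}[S_M]$ and let $G$ be a set of nonzero polynomials in $\mathbb{K}[S_M]$. The multivariate division algorithm of $f$ by $G$ with respect to the sparse order $\prec$, using the divisibility relation $\mid_\delta$, terminates. Moreover, if $G$ is a sparse Gröbner basis of an ideal $I\subset\mathbb{K}[S_M]$ with respect to $\prec$ and $f\equiv f'\pmod I$, then the remainders of the division algorithm for $f$ and for $f'$ coincide, and this remainder is the same for any sparse Gröbner basis of $I$ with respect to $\prec$.
   Context: Let $\mathbb{K}$ be a field of characteristic $0$ and $M\subset\mathbb{R}^n$ a polytope with $0\in M$. Let $S_M\subset\mathbb{Z}^n$ be the affine semigroup generated by $M\cap\mathbb{Z}^n$ and $S_M^h\subset\mathbb{Z}^{n+1}$ the affine semigroup generated by $\{(s,1):s\in M\cap\mathbb{Z}^n\}$; both are assumed pointed (no nonzero invertible elements). For an affine semigroup $S$, $\mathbb{K}[S]$ is the semigroup algebra with $\mathbb{K}$-basis the monomials $X^s$, $s\in S$, and $X^sX^t=X^{s+t}$. $\mathbb{K}[S_M^h]$ is graded by $\deg X^{(s,d)}=d$. The dehomogenization $\chi:\mathbb{K}[S_M^h]\to\mathbb{K}[S_M]$ is the $\mathbb{K}$-algebra epimorphism $X^{(s,d)}\mapsto X^s$. The affine degree $\delta^A(X^s)$ of a monomial of $\mathbb{K}[S_M]$ is the least $d\in\mathbb{N}$ with $(s,d)\in S_M^h$; for $f=\sum c_sX^s\neq0$, $\delta^A(f)=\max\{\delta^A(X^s):c_s\neq0\}$. The homogenization of $f=\sum c_sX^s$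 is $\chi^{-1}(f)=\sum c_sX^{(s,\delta^A(f))}$. The sparse degree of $f\in\mathbb{K}[S_M^h]$ is $\delta(f):=\delta^A(\chi(f))$. Fix a monomial order $<_M$ on $\mathbb{K}[S_M]$. The sparse order $\prec$ on monomials of $\mathbb{K}[S_M]$: $X^s\prec X^r$ iff $\delta^A(X^s)<\delta^A(X^r)$, or $\delta^A(X^s)=\delta^A(X^r)$ and $X^s<_MX^r$. Divisibility: for monomials of $\mathbb{K}[S_M^h]$, $X^{(s,d_s)}\mid_\delta X^{(r,d_r)}$ if there is a monomial $X^{(t,d_t)}\in\mathbb{K}[S_M^h]$ with $X^{(s,d_s)}X^{(t,d_t)}=X^{(r,d_r)}$ and $\delta(X^{(s,d_s)})+\delta(X^{(t,d_t)})=\delta(X^{(r,d_r)})$; for monomials of $\mathbb{K}[S_M]$, $X^s\mid_\delta X^r$ iff $\chi^{-1}(X^s)\mid_\delta\chi^{-1}(X^r)$. A sparse Gröbner basis of an ideal $I\subset\mathbb{K}[S_M]$ w.r.t. $\prec$ is a subset of $I$ generating $I$ such that for every nonzero $f\in I$ some element $g$ of it satisfies $\mathrm{LM}_\prec(g)\mid_\delta\mathrm{LM}_\prec(f)$. The division algorithm of $f$ by $G$: set $p:=f$, $r:=0$; while $p\neq0$: if there is $g\in G$ with $\mathrm{LM}_\prec(g)\mid_\delta\mathrm{LM}_\prec(p)$, write $\mathrm{LM}_\prec(p)=X^t\,\mathrm{LM}_\prec(g)$ as in the definition of $\mid_\delta$ and replace $p$ by $p-\frac{\mathrm{LC}(p)}{\mathrm{LC}(g)}X^tg$;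 otherwise move the leading term of $p$ to $r$. The output is the remainder $r$. *)

theory Defs
  imports "HOL-Analysis.Analysis" "HOL-Library.Poly_Mapping" "HOL-Library.Product_Plus"
begin

(* Exponents live in Z^n, rendered as int^'n for a finite index type 'n.
   Elements of K[Z^n] are finitely supported maps int^'n \<Rightarrow>\<^sub>0 'k
   (X^s = Poly_Mapping.single s 1, product = convolution). *)

definition vec_of_int :: "int^'n \<Rightarrow> real^'n" where
  "vec_of_int s = (\<chi> i. real_of_int (s $ i))"

definition lattice_pts :: "(real^'n) set \<Rightarrow> (int^'n) set" where
  "lattice_pts M = {s. vec_of_int s \<in> M}"

inductive_set gen_semigroup :: "'a::comm_monoid_add set \<Rightarrow> 'a set" for A where
  gen_zero: "0 \<in> gen_semigroup A"
| gen_add: "s \<in> gen_semigroup A \<Longrightarrow> a \<in> A \<Longrightarrow> s + a \<in> gen_semigroup A"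

definition S_M :: "(real^'n) set \<Rightarrow> (int^'n) set" where
  "S_M M = gen_semigroup (lattice_pts M)"

definition S_Mh :: "(real^'n) set \<Rightarrow> ((int^'n) \<times> int) set" where
  "S_Mh M = gen_semigroup ((\<lambda>s. (s, 1)) ` lattice_pts M)"

definition pointed :: "'a::comm_monoid_add set \<Rightarrow> bool" where
  "pointed S \<longleftrightarrow> (\<forall>s\<in>S. \<forall>t\<in>S. s + t = 0 \<longrightarrow> s = 0)"

definition semialg :: "'a set \<Rightarrow> ('a \<Rightarrow>\<^sub>0 'k::zero) set" where
  "semialg S = {p. Poly_Mapping.keys p \<subseteq> S}"

definition aff_deg :: "(real^'n) set \<Rightarrow> int^'n \<Rightarrow> nat" where
  "aff_deg M s = (LEAST d. (s, int d) \<in> S_Mh M)"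

definition homog_mon :: "(real^'n) set \<Rightarrow> int^'n \<Rightarrow> (int^'n) \<times> int" where
  "homog_mon M s = (s, int (aff_deg M s))"

definition sparse_deg :: "(real^'n) set \<Rightarrow> (int^'n) \<times> int \<Rightarrow> nat" where
  "sparse_deg M sd = aff_deg M (fst sd)"

definition hdvd_delta :: "(real^'n) set \<Rightarrow> (int^'n) \<times> int \<Rightarrow> (int^'n) \<times> int \<Rightarrow> bool" where
  "hdvd_delta M a b \<longleftrightarrow> (\<exists>c \<in> S_Mh M. a + c = b \<and> sparse_deg M a + sparse_deg M c = sparse_deg M b)"

definition dvd_delta :: "(real^'n) set \<Rightarrow> int^'n \<Rightarrow> int^'n \<Rightarrow> bool" where
  "dvd_delta M s r \<longleftrightarrow> hdvd_delta M (homog_mon M s) (homog_mon M r)"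

definition monomial_order :: "'a::comm_monoid_add set \<Rightarrow> ('a \<Rightarrow> 'a \<Rightarrow> bool) \<Rightarrow> bool" where
  "monomial_order S lt \<longleftrightarrow>
     (\<forall>s\<in>S. \<not> lt s s) \<and>
     (\<forall>s\<in>S. \<forall>r\<in>S. \<forall>t\<in>S. lt s r \<longrightarrow> lt r t \<longrightarrow> lt s t) \<and>
     (\<forall>s\<in>S. \<forall>r\<in>S. s \<noteq> r \<longrightarrow> lt s r \<or> lt r s) \<and>
     (\<forall>s\<in>S. \<forall>r\<in>S. \<forall>t\<in>S. lt s r \<longrightarrow> lt (s + t) (r + t)) \<and>
     wf {(s, r). s \<in> S \<and> r \<in> S \<and> lt s r}"

definition sparse_less :: "(real^'n) set \<Rightarrow> (int^'n \<Rightarrow> int^'n \<Rightarrow> bool) \<Rightarrow> int^'n \<Rightarrow> int^'n \<Rightarrow> bool" where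
  "sparse_less M lt s r \<longleftrightarrow>
     aff_deg M s < aff_deg M r \<or> (aff_deg M s = aff_deg M r \<and> lt s r)"

definition LM :: "(real^'n) set \<Rightarrow> (int^'n \<Rightarrow> int^'n \<Rightarrow> bool) \<Rightarrow> (int^'n \<Rightarrow>\<^sub>0 'k::zero) \<Rightarrow> int^'n" where
  "LM M lt p = (THE s. s \<in> Poly_Mapping.keys p \<and> (\<forall>r\<in>Poly_Mapping.keys p. r \<noteq> s \<longrightarrow> sparse_less M lt r s))"

definition LC :: "(real^'n) set \<Rightarrow> (int^'n \<Rightarrow> int^'n \<Rightarrow> bool) \<Rightarrow> (int^'n \<Rightarrow>\<^sub>0 'k::zero) \<Rightarrow> 'k" where
  "LC M lt p = Poly_Mapping.lookup p (LM M lt p)"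

definition is_ideal :: "'a::comm_monoid_add set \<Rightarrow> ('a \<Rightarrow>\<^sub>0 'k::comm_ring_1) set \<Rightarrow> bool" where
  "is_ideal S I \<longleftrightarrow> I \<subseteq> semialg S \<and> 0 \<in> I \<and>
     (\<forall>p\<in>I. \<forall>q\<in>I. p + q \<in> I) \<and> (\<forall>p\<in>I. \<forall>h\<in>semialg S. h * p \<in> I)"

definition ideal_gen :: "'a::comm_monoid_add set \<Rightarrow> ('a \<Rightarrow>\<^sub>0 'k::comm_ring_1) set \<Rightarrow> ('a \<Rightarrow>\<^sub>0 'k) set" where
  "ideal_gen S G = \<Inter>{J. is_ideal S J \<and> G \<subseteq> J}"

definition sparse_GB :: "(real^'n) set \<Rightarrow> (int^'n \<Rightarrow> int^'n \<Rightarrow> bool) \<Rightarrow>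
    (int^'n \<Rightarrow>\<^sub>0 'k::comm_ring_1) set \<Rightarrow> (int^'n \<Rightarrow>\<^sub>0 'k) set \<Rightarrow> bool" where
  "sparse_GB M lt G I \<longleftrightarrow> G \<subseteq> I \<and> ideal_gen (S_M M) G = I \<and>
     (\<forall>f\<in>I. f \<noteq> 0 \<longrightarrow> (\<exists>g\<in>G. dvd_delta M (LM M lt g) (LM M lt f)))"

(* One step of the (nondeterministic) division algorithm on states (p, r).
   In a reduction step the quotient monomial X^t is the dehomogenization of the
   witness of |_delta, i.e. t = LM(p) - LM(g). *)
inductive div_step :: "(real^'n) set \<Rightarrow> (int^'n \<Rightarrow> int^'n \<Rightarrow> bool) \<Rightarrow> (int^'n \<Rightarrow>\<^sub>0 'k::field) set \<Rightarrow>
    (int^'n \<Rightarrow>\<^sub>0 'k) \<times> (int^'n \<Rightarrow>\<^sub>0 'k) \<Rightarrow> (int^'n \<Rightarrow>\<^sub>0 'k) \<times> (int^'n \<Rightarrow>\<^sub>0 'k) \<Rightarrow> bool"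
  for M lt G where
  reduce: "p \<noteq> 0 \<Longrightarrow> g \<in> G \<Longrightarrow> dvd_delta M (LM M lt g) (LM M lt p) \<Longrightarrow>
    div_step M lt G (p, r)
      (p - Poly_Mapping.single (LM M lt p - LM M lt g) (LC M lt p / LC M lt g) * g, r)"
| move: "p \<noteq> 0 \<Longrightarrow> \<not> (\<exists>g\<in>G. dvd_delta M (LM M lt g) (LM M lt p)) \<Longrightarrow>
    div_step M lt G (p, r)
      (p - Poly_Mapping.single (LM M lt p) (LC M lt p),
       r + Poly_Mapping.single (LM M lt p) (LC M lt p))"

definition div_remainder :: "(real^'n) set \<Rightarrow> (int^'n \<Rightarrow> int^'n \<Rightarrow> bool) \<Rightarrow> (int^'n \<Rightarrow>\<^sub>0 'k::field) set \<Rightarrow>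
    (int^'n \<Rightarrow>\<^sub>0 'k) \<Rightarrow> (int^'n \<Rightarrow>\<^sub>0 'k) \<Rightarrow> bool" where
  "div_remainder M lt G f r \<longleftrightarrow> (div_step M lt G)\<^sup>*\<^sup>* (f, 0) (0, r)"

end

theory Submission
  imports Defs
begin

(* Every step of the division algorithm replaces p by a polynomial all of whose monomials lie
   strictly below LM(p) in the sparse order. For a reduction step this needs LM(X^t g) = X^t LM(g):
   the affine degree is only subadditive, and the additivity demanded by |_delta is exactly what
   keeps every other monomial of X^t g below X^t LM(g). Since the sparse order is a well-order on
   S_M, the multisets of monomials of p decrease in the multiset extension, so the algorithm
   terminates.
   Along the way f - (p + r) stays in the ideal and no monomial of r is |_delta-divisible by a
   leading monomial of G. So if r and r' are remainders of f and f' by Groebner bases G and G' of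
   I, then r - r' lies in I; were it nonzero, its leading monomial would be divisible both by some
   LM(g), g in G, and by some LM(g'), g' in G', while being a monomial of r or of r'. *)

lemma gen_semigroup_add:
  assumes "a \<in> gen_semigroup A" and "b \<in> gen_semigroup A"
  shows "a + b \<in> gen_semigroup A"
  using assms(2)
proof (induction b rule: gen_semigroup.induct)
  case gen_zero
  then show ?case using assms(1) by simp
next
  case (gen_add s x)
  then show ?case by (metis add.assoc gen_semigroup.gen_add)
qed

lemma S_M_zero: "0 \<in> S_M M"
  unfolding S_M_def by (rule gen_semigroup.gen_zero)

lemma S_M_add: "s \<in> S_M M \<Longrightarrow> r \<in> S_M M \<Longrightarrow> s + r \<in> S_M M"
  unfolding S_M_def by (rule gen_semigroup_add)

lemma fst_mem_S_M_if_mem_S_Mh: "x \<in> S_Mh M \<Longrightarrow> fst x \<in> S_M M"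
  unfolding S_Mh_def S_M_def
  by (induction x rule: gen_semigroup.induct) (auto intro: gen_semigroup.intros)

lemma ex_degree_mem_S_Mh: "s \<in> S_M M \<Longrightarrow> \<exists>d::nat. (s, int d) \<in> S_Mh M"
  unfolding S_Mh_def S_M_def
proof (induction s rule: gen_semigroup.induct)
  case gen_zero
  show ?case by (rule exI[of _ 0]) (metis gen_semigroup.gen_zero of_nat_0 zero_prod_def)
next
  case (gen_add s a)
  then obtain d where "(s, int d) \<in> gen_semigroup ((\<lambda>s. (s, 1::int)) ` lattice_pts M)"
    by blast
  then have "(s, int d) + (a, 1) \<in> gen_semigroup ((\<lambda>s. (s, 1::int)) ` lattice_pts M)"
    using gen_add(2) by (intro gen_semigroup.gen_add) auto
  then show ?case by (intro exI[of _ "Suc d"]) (simp add: add.commute)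
qed

lemma aff_deg_mem_S_Mh: "s \<in> S_M M \<Longrightarrow> (s, int (aff_deg M s)) \<in> S_Mh M"
  unfolding aff_deg_def using ex_degree_mem_S_Mh by (rule LeastI_ex)

lemma aff_deg_le: "(s, int d) \<in> S_Mh M \<Longrightarrow> aff_deg M s \<le> d"
  unfolding aff_deg_def by (rule Least_le)

lemma aff_deg_add_le:
  assumes "s \<in> S_M M" and "r \<in> S_M M"
  shows "aff_deg M (s + r) \<le> aff_deg M s + aff_deg M r"
proof -
  have "(s, int (aff_deg M s)) + (r, int (aff_deg M r)) \<in> S_Mh M"
    using aff_deg_mem_S_Mh[OF assms(1)] aff_deg_mem_S_Mh[OF assms(2)] unfolding S_Mh_def
    by (rule gen_semigroup_add)
  then show ?thesis by (intro aff_deg_le) simp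
qed

lemma dvd_deltaD:
  assumes "dvd_delta M a b"
  shows "b - a \<in> S_M M" and "aff_deg M a + aff_deg M (b - a) = aff_deg M b"
proof -
  obtain c where c: "c \<in> S_Mh M" "homog_mon M a + c = homog_mon M b"
    "sparse_deg M (homog_mon M a) + sparse_deg M c = sparse_deg M (homog_mon M b)"
    using assms unfolding dvd_delta_def hdvd_delta_def by blast
  have "fst c = b - a"
    using c(2) unfolding homog_mon_def by (cases c) (auto simp: algebra_simps)
  then show "b - a \<in> S_M M" and "aff_deg M a + aff_deg M (b - a) = aff_deg M b"
    using c(3) fst_mem_S_M_if_mem_S_Mh[OF c(1)] unfolding sparse_deg_def homog_mon_def by simp_all
qed

lemma monomial_orderD:
  assumes "monomial_order S lt"
  shows monomial_order_irrefl: "s \<in> S \<Longrightarrow> \<not> lt s s"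
    and monomial_order_trans: "s \<in> S \<Longrightarrow> r \<in> S \<Longrightarrow> t \<in> S \<Longrightarrow> lt s r \<Longrightarrow> lt r t \<Longrightarrow> lt s t"
    and monomial_order_total: "s \<in> S \<Longrightarrow> r \<in> S \<Longrightarrow> s \<noteq> r \<Longrightarrow> lt s r \<or> lt r s"
    and monomial_order_add_right: "s \<in> S \<Longrightarrow> r \<in> S \<Longrightarrow> t \<in> S \<Longrightarrow> lt s r \<Longrightarrow> lt (s + t) (r + t)"
    and monomial_order_wf: "wf {(s, r). s \<in> S \<and> r \<in> S \<and> lt s r}"
  using assms unfolding monomial_order_def by meson+

lemma sparse_less_irrefl:
  "monomial_order (S_M M) lt \<Longrightarrow> s \<in> S_M M \<Longrightarrow> \<not> sparse_less M lt s s"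
  using monomial_order_irrefl[of "S_M M" lt s] by (simp add: sparse_less_def)

lemma sparse_less_trans:
  "monomial_order (S_M M) lt \<Longrightarrow> s \<in> S_M M \<Longrightarrow> r \<in> S_M M \<Longrightarrow> t \<in> S_M M \<Longrightarrow>
   sparse_less M lt s r \<Longrightarrow> sparse_less M lt r t \<Longrightarrow> sparse_less M lt s t"
  using monomial_order_trans[of "S_M M" lt s r t] unfolding sparse_less_def by linarith

lemma sparse_less_total:
  "monomial_order (S_M M) lt \<Longrightarrow> s \<in> S_M M \<Longrightarrow> r \<in> S_M M \<Longrightarrow> s \<noteq> r \<Longrightarrow>
   sparse_less M lt s r \<or> sparse_less M lt r s"
  using monomial_order_total[of "S_M M" lt s r] unfolding sparse_less_def by linarith

lemma wf_sparse_less: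
  assumes "monomial_order (S_M M) lt"
  shows "wf {(s, r). s \<in> S_M M \<and> r \<in> S_M M \<and> sparse_less M lt s r}"
proof -
  have "wf (inv_image (less_than <*lex*> {(s, r). s \<in> S_M M \<and> r \<in> S_M M \<and> lt s r})
            (\<lambda>s. (aff_deg M s, s)))"
    using monomial_order_wf[OF assms] by (intro wf_inv_image wf_lex_prod wf_less_than)
  then show ?thesis
    by (rule wf_subset) (auto simp: sparse_less_def)
qed

lemma sparse_less_add_left:
  assumes mo: "monomial_order (S_M M) lt" and S: "t \<in> S_M M" "b \<in> S_M M" "a \<in> S_M M"
    and less: "sparse_less M lt b a" and additive: "aff_deg M (t + a) = aff_deg M t + aff_deg M a"
  shows "sparse_less M lt (t + b) (t + a)"
proof (cases "aff_deg M b < aff_deg M a")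
  case True
  then show ?thesis using aff_deg_add_le[OF S(1,2)] additive unfolding sparse_less_def by simp
next
  case False
  then have "aff_deg M b = aff_deg M a" and "lt b a" using less unfolding sparse_less_def by auto
  moreover have "lt (t + b) (t + a)"
    using monomial_order_add_right[OF mo S(2,3,1) \<open>lt b a\<close>] by (simp add: add.commute)
  ultimately show ?thesis using aff_deg_add_le[OF S(1,2)] additive unfolding sparse_less_def by auto
qed

lemma finite_has_greatest_wrt_total_order:
  assumes "finite A" and "A \<noteq> {}" and "A \<subseteq> S"
    and trans: "\<And>s r t. s \<in> S \<Longrightarrow> r \<in> S \<Longrightarrow> t \<in> S \<Longrightarrow> rel s r \<Longrightarrow> rel r t \<Longrightarrow> rel s t"
    and total: "\<And>s r. s \<in> S \<Longrightarrow> r \<in> S \<Longrightarrow> s \<noteq> r \<Longrightarrow> rel s r \<or> rel r s"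
  shows "\<exists>s\<in>A. \<forall>r\<in>A. r \<noteq> s \<longrightarrow> rel r s"
  using assms(1-3)
proof (induction A rule: finite_ne_induct)
  case (singleton x)
  then show ?case by auto
next
  case (insert x F)
  then obtain s where s: "s \<in> F" "\<forall>r\<in>F. r \<noteq> s \<longrightarrow> rel r s" by auto
  show ?case
  proof (cases "rel x s")
    case True
    then show ?thesis using s by auto
  next
    case False
    then have "rel s x" using total[of x s] s insert by auto
    have "rel r x" if "r \<in> insert x F" and "r \<noteq> x" for r
    proof (cases "r = s")
      case False
      then have "rel r s" using that s by auto
      moreover have "r \<in> S" and "s \<in> S" and "x \<in> S" using that s insert.prems by auto
      ultimately show ?thesis using trans \<open>rel s x\<close> by blast
    qed (use \<open>rel s x\<close> in simp)
    then show ?thesis by blast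
  qed
qed

lemma LM_eqI:
  assumes mo: "monomial_order (S_M M) lt" and p: "p \<in> semialg (S_M M)"
    and s: "s \<in> Poly_Mapping.keys p" "\<forall>r\<in>Poly_Mapping.keys p. r \<noteq> s \<longrightarrow> sparse_less M lt r s"
  shows "LM M lt p = s"
  unfolding LM_def
proof (rule the_equality)
  fix s' assume s': "s' \<in> Poly_Mapping.keys p \<and> (\<forall>r\<in>Poly_Mapping.keys p. r \<noteq> s' \<longrightarrow> sparse_less M lt r s')"
  show "s' = s"
  proof (rule ccontr)
    assume "s' \<noteq> s"
    then have "sparse_less M lt s' s" and "sparse_less M lt s s'" using s s' by auto
    moreover have "s \<in> S_M M" and "s' \<in> S_M M" using s s' p unfolding semialg_def by auto
    ultimately show False using sparse_less_trans[OF mo, of s s' s] sparse_less_irrefl[OF mo, of s] by blast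
  qed
qed (use s in blast)

lemma LM_keys:
  assumes mo: "monomial_order (S_M M) lt" and p: "p \<in> semialg (S_M M)" "p \<noteq> 0"
  shows LM_in_keys: "LM M lt p \<in> Poly_Mapping.keys p"
    and LM_greatest: "r \<in> Poly_Mapping.keys p \<Longrightarrow> r \<noteq> LM M lt p \<Longrightarrow> sparse_less M lt r (LM M lt p)"
proof -
  have "Poly_Mapping.keys p \<subseteq> S_M M" using p(1) unfolding semialg_def by simp
  moreover have "Poly_Mapping.keys p \<noteq> {}" using p(2) by simp
  ultimately obtain s where s: "s \<in> Poly_Mapping.keys p" "\<forall>r\<in>Poly_Mapping.keys p. r \<noteq> s \<longrightarrow> sparse_less M lt r s"
    using finite_has_greatest_wrt_total_order[OF finite_keys, of p "S_M M" "sparse_less M lt"]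
      sparse_less_trans[OF mo] sparse_less_total[OF mo] by blast
  with LM_eqI[OF mo p(1) s] show "LM M lt p \<in> Poly_Mapping.keys p"
    and "r \<in> Poly_Mapping.keys p \<Longrightarrow> r \<noteq> LM M lt p \<Longrightarrow> sparse_less M lt r (LM M lt p)"
    by simp_all
qed

lemma LC_nonzero:
  "monomial_order (S_M M) lt \<Longrightarrow> p \<in> semialg (S_M M) \<Longrightarrow> p \<noteq> 0 \<Longrightarrow> LC M lt p \<noteq> 0"
  using LM_in_keys[of M lt p] by (simp add: LC_def in_keys_iff)

lemma LM_mem_S_M:
  "monomial_order (S_M M) lt \<Longrightarrow> p \<in> semialg (S_M M) \<Longrightarrow> p \<noteq> 0 \<Longrightarrow> LM M lt p \<in> S_M M"
  using LM_in_keys[of M lt p] unfolding semialg_def by blast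

lemma lookup_single_mult_add:
  fixes g :: "'a::ab_group_add \<Rightarrow>\<^sub>0 'b::comm_semiring_1"
  shows "Poly_Mapping.lookup (Poly_Mapping.single t c * g) (t + s) = c * Poly_Mapping.lookup g s"
proof -
  have "Poly_Mapping.lookup (Poly_Mapping.single t c * g) (t + s) =
     (\<Sum>l. (c when t = l) * (\<Sum>q. Poly_Mapping.lookup g q when t + s = l + q))"
    by (simp add: lookup_mult lookup_single)
  also have "\<dots> = c * (\<Sum>q. Poly_Mapping.lookup g q when t + s = t + q)"
    by (simp add: when_mult)
  finally show ?thesis by simp
qed

lemma keys_single_mult: "Poly_Mapping.keys (Poly_Mapping.single t c * g) \<subseteq> (+) t ` Poly_Mapping.keys g"
  using keys_mult[of "Poly_Mapping.single t c" g] by (auto split: if_splits)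

lemma semialg_single: "t \<in> S \<Longrightarrow> Poly_Mapping.single t c \<in> semialg S"
  unfolding semialg_def by auto

lemma semialg_diff: "p \<in> semialg S \<Longrightarrow> q \<in> semialg S \<Longrightarrow> p - q \<in> semialg S"
  using keys_diff[of p q] unfolding semialg_def by blast

lemma ideal_zero: "is_ideal S I \<Longrightarrow> 0 \<in> I"
  unfolding is_ideal_def by blast

lemma ideal_subset_semialg: "is_ideal S I \<Longrightarrow> p \<in> I \<Longrightarrow> p \<in> semialg S"
  unfolding is_ideal_def by blast

lemma ideal_add: "is_ideal S I \<Longrightarrow> p \<in> I \<Longrightarrow> q \<in> I \<Longrightarrow> p + q \<in> I"
  unfolding is_ideal_def by blast

lemma ideal_mult: "is_ideal S I \<Longrightarrow> p \<in> I \<Longrightarrow> h \<in> semialg S \<Longrightarrow> h * p \<in> I"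
  unfolding is_ideal_def by blast

lemma ideal_diff:
  fixes I :: "('a::comm_monoid_add \<Rightarrow>\<^sub>0 'b::comm_ring_1) set"
  assumes I: "is_ideal S I" and "0 \<in> S" and "p \<in> I" and "q \<in> I"
  shows "p - q \<in> I"
proof -
  have "-1 \<in> semialg S" using \<open>0 \<in> S\<close> unfolding semialg_def by simp
  then have "- q \<in> I" using ideal_mult[OF I \<open>q \<in> I\<close>] by fastforce
  then show ?thesis using ideal_add[OF I \<open>p \<in> I\<close>] by fastforce
qed

lemma keys_monom_mult_sparse_le:
  assumes mo: "monomial_order (S_M M) lt" and g: "g \<in> semialg (S_M M)" "g \<noteq> 0"
    and dvd: "dvd_delta M (LM M lt g) m"
    and k: "k \<in> Poly_Mapping.keys (Poly_Mapping.single (m - LM M lt g) c * g)"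
  shows "k \<in> S_M M" and "k = m \<or> sparse_less M lt k m"
proof -
  define t where "t = m - LM M lt g"
  have tS: "t \<in> S_M M" and additive: "aff_deg M (t + LM M lt g) = aff_deg M t + aff_deg M (LM M lt g)"
    using dvd_deltaD[OF dvd] by (simp_all add: t_def)
  obtain b where b: "b \<in> Poly_Mapping.keys g" "k = t + b"
    using k keys_single_mult unfolding t_def by blast
  have bS: "b \<in> S_M M" using b(1) g(1) unfolding semialg_def by blast
  then show "k \<in> S_M M" using S_M_add[OF tS] b(2) by simp
  show "k = m \<or> sparse_less M lt k m"
  proof (cases "b = LM M lt g")
    case False
    then have "sparse_less M lt b (LM M lt g)" using LM_greatest[OF mo g b(1)] by blast
    then have "sparse_less M lt (t + b) (t + LM M lt g)"
      using sparse_less_add_left[OF mo tS bS LM_mem_S_M[OF mo g] _ additive] by blast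
    then show ?thesis using b(2) by (simp add: t_def)
  qed (simp add: b(2) t_def)
qed

lemma cancel_leading_monomial:
  assumes mo: "monomial_order (S_M M) lt" and p: "p \<in> semialg (S_M M)" "p \<noteq> 0"
    and q_keys: "\<And>k. k \<in> Poly_Mapping.keys q \<Longrightarrow> k \<in> S_M M \<and> (k = LM M lt p \<or> sparse_less M lt k (LM M lt p))"
    and q_lead: "Poly_Mapping.lookup q (LM M lt p) = LC M lt p"
  shows "p - q \<in> semialg (S_M M)"
    and "\<And>k. k \<in> Poly_Mapping.keys (p - q) \<Longrightarrow> sparse_less M lt k (LM M lt p)"
proof -
  have "q \<in> semialg (S_M M)" using q_keys unfolding semialg_def by blast
  then show "p - q \<in> semialg (S_M M)" using semialg_diff[OF p(1)] by blast
  fix k assume k: "k \<in> Poly_Mapping.keys (p - q)"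
  have "k \<noteq> LM M lt p"
    using k q_lead unfolding LC_def by (auto simp: in_keys_iff lookup_minus)
  moreover have "k \<in> Poly_Mapping.keys p \<or> k \<in> Poly_Mapping.keys q"
    using k keys_diff[of p q] by blast
  ultimately show "sparse_less M lt k (LM M lt p)"
    using LM_greatest[OF mo p] q_keys by blast
qed

lemma div_step_decreasing:
  assumes mo: "monomial_order (S_M M) lt" and G: "G \<subseteq> semialg (S_M M) - {0}"
    and p: "p \<in> semialg (S_M M)" and step: "div_step M lt G (p, r) (p', r')"
  shows "p \<noteq> 0" and "p' \<in> semialg (S_M M)"
    and "\<And>k. k \<in> Poly_Mapping.keys p' \<Longrightarrow> sparse_less M lt k (LM M lt p)"
proof -
  obtain q where nonzero: "p \<noteq> 0" and p': "p' = p - q"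
    and q_keys: "\<And>k. k \<in> Poly_Mapping.keys q \<Longrightarrow> k \<in> S_M M \<and> (k = LM M lt p \<or> sparse_less M lt k (LM M lt p))"
    and q_lead: "Poly_Mapping.lookup q (LM M lt p) = LC M lt p"
    using step
  proof cases
    case (reduce g)
    have g: "g \<in> semialg (S_M M)" "g \<noteq> 0" using G reduce(4) by auto
    define q where "q = Poly_Mapping.single (LM M lt p - LM M lt g) (LC M lt p / LC M lt g) * g"
    have "Poly_Mapping.lookup q (LM M lt p) = LC M lt p / LC M lt g * LC M lt g"
      using lookup_single_mult_add[of "LM M lt p - LM M lt g" _ g "LM M lt g"]
      unfolding q_def LC_def by simp
    then have "Poly_Mapping.lookup q (LM M lt p) = LC M lt p"
      using LC_nonzero[OF mo g] by simp
    moreover have "k \<in> S_M M \<and> (k = LM M lt p \<or> sparse_less M lt k (LM M lt p))"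
      if "k \<in> Poly_Mapping.keys q" for k
      using keys_monom_mult_sparse_le[OF mo g reduce(5)] that unfolding q_def by blast
    moreover have "p' = p - q" using reduce(1) unfolding q_def by simp
    ultimately show thesis using that reduce(3) by blast
  next
    case move
    define q where "q = Poly_Mapping.single (LM M lt p) (LC M lt p)"
    have "k \<in> S_M M \<and> (k = LM M lt p \<or> sparse_less M lt k (LM M lt p))"
      if "k \<in> Poly_Mapping.keys q" for k
      using that LM_mem_S_M[OF mo p move(3)] unfolding q_def by (simp split: if_splits)
    moreover have "Poly_Mapping.lookup q (LM M lt p) = LC M lt p" unfolding q_def by simp
    moreover have "p' = p - q" using move(1) unfolding q_def by simp
    ultimately show thesis using that move(3) by blast
  qed
  note cancel = cancel_leading_monomial[OF mo p nonzero q_keys q_lead]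
  show "p \<noteq> 0" by (rule nonzero)
  show "p' \<in> semialg (S_M M)" unfolding p' by (rule cancel(1))
  show "\<And>k. k \<in> Poly_Mapping.keys p' \<Longrightarrow> sparse_less M lt k (LM M lt p)"
    unfolding p' by (rule cancel(2))
qed

lemma div_step_keys_mult_less:
  assumes mo: "monomial_order (S_M M) lt" and G: "G \<subseteq> semialg (S_M M) - {0}"
    and p: "p \<in> semialg (S_M M)" and step: "div_step M lt G (p, r) (p', r')"
  shows "(mset_set (Poly_Mapping.keys p'), mset_set (Poly_Mapping.keys p))
           \<in> mult {(s, t). s \<in> S_M M \<and> t \<in> S_M M \<and> sparse_less M lt s t}"
    (is "_ \<in> mult ?R")
proof -
  note decreasing = div_step_decreasing[OF mo G p step]
  have "mset_set (Poly_Mapping.keys p) \<noteq> {#}"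
    using decreasing(1) by (simp add: mset_set_empty_iff)
  moreover have "\<forall>k \<in># mset_set (Poly_Mapping.keys p'). \<exists>j \<in># mset_set (Poly_Mapping.keys p). (k, j) \<in> ?R"
  proof
    fix k assume "k \<in># mset_set (Poly_Mapping.keys p')"
    then have k: "k \<in> Poly_Mapping.keys p'" by simp
    then have "(k, LM M lt p) \<in> ?R"
      using decreasing(2,3) LM_mem_S_M[OF mo p decreasing(1)] unfolding semialg_def by auto
    then show "\<exists>j \<in># mset_set (Poly_Mapping.keys p). (k, j) \<in> ?R"
      using LM_in_keys[OF mo p decreasing(1)] by auto
  qed
  ultimately show ?thesis
    using one_step_implies_mult[of _ _ ?R "{#}"] by simp
qed

lemma div_step_terminates:
  assumes mo: "monomial_order (S_M M) lt" and G: "G \<subseteq> semialg (S_M M) - {0}"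
    and f: "f \<in> semialg (S_M M)"
  shows "\<not> (\<exists>st. st 0 = (f, 0) \<and> (\<forall>i. div_step M lt G (st i) (st (Suc i))))"
proof
  assume "\<exists>st. st 0 = (f, 0) \<and> (\<forall>i. div_step M lt G (st i) (st (Suc i)))"
  then obtain st where st0: "st 0 = (f, 0)" and st: "\<And>i. div_step M lt G (st i) (st (Suc i))"
    by blast
  have step: "div_step M lt G (fst (st i), snd (st i)) (fst (st (Suc i)), snd (st (Suc i)))" for i
    using st by simp
  have semialg: "fst (st i) \<in> semialg (S_M M)" for i
  proof (induction i)
    case 0
    then show ?case using st0 f by simp
  next
    case (Suc i)
    show ?case by (rule div_step_decreasing(2)[OF mo G Suc step])
  qed
  define H where "H i = mset_set (Poly_Mapping.keys (fst (st i)))" for i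
  have "wf (mult {(s, t). s \<in> S_M M \<and> t \<in> S_M M \<and> sparse_less M lt s t})"
    by (rule wf_mult[OF wf_sparse_less[OF mo]])
  moreover have "\<forall>i. (H (Suc i), H i) \<in> mult {(s, t). s \<in> S_M M \<and> t \<in> S_M M \<and> sparse_less M lt s t}"
    unfolding H_def using div_step_keys_mult_less[OF mo G semialg step] by blast
  ultimately show False unfolding wf_iff_no_infinite_down_chain by blast
qed

definition reduced_wrt :: "(real^'n) set \<Rightarrow> (int^'n \<Rightarrow> int^'n \<Rightarrow> bool) \<Rightarrow>
    (int^'n \<Rightarrow>\<^sub>0 'k::zero) set \<Rightarrow> (int^'n \<Rightarrow>\<^sub>0 'k) \<Rightarrow> bool" where
  "reduced_wrt M lt G r \<longleftrightarrow> (\<forall>k\<in>Poly_Mapping.keys r. \<forall>g\<in>G. \<not> dvd_delta M (LM M lt g) k)"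

lemma div_step_invariant:
  fixes f :: "int^'n \<Rightarrow>\<^sub>0 'k::field"
  assumes mo: "monomial_order (S_M M) lt" and G: "G \<subseteq> semialg (S_M M) - {0}"
    and I: "is_ideal (S_M M) I" and GI: "G \<subseteq> I" and f: "f \<in> semialg (S_M M)"
    and steps: "(div_step M lt G)\<^sup>*\<^sup>* (f, 0) (p, r)"
  shows "p \<in> semialg (S_M M) \<and> f - (p + r) \<in> I \<and> reduced_wrt M lt G r"
  using steps
proof (induction rule: rtranclp_induct2)
  case refl
  then show ?case using f ideal_zero[OF I] by (simp add: reduced_wrt_def)
next
  case (step p r p' r')
  then have IH: "p \<in> semialg (S_M M)" "f - (p + r) \<in> I" "reduced_wrt M lt G r" by blast+
  have "p' \<in> semialg (S_M M)" using div_step_decreasing(2)[OF mo G IH(1) step(2)] .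
  moreover from step(2) have "f - (p' + r') \<in> I \<and> reduced_wrt M lt G r'"
  proof cases
    case (reduce g)
    define q where "q = Poly_Mapping.single (LM M lt p - LM M lt g) (LC M lt p / LC M lt g) * g"
    have "q \<in> I"
      using ideal_mult[OF I _ semialg_single[OF dvd_deltaD(1)[OF reduce(5)]]] GI reduce(4)
      unfolding q_def by blast
    have "f - (p' + r') = (f - (p + r)) + q"
      using reduce(1,2) unfolding q_def by (simp add: algebra_simps)
    also have "\<dots> \<in> I" by (rule ideal_add[OF I IH(2) \<open>q \<in> I\<close>])
    finally show ?thesis using IH(3) reduce(2) by simp
  next
    case move
    have "f - (p' + r') = f - (p + r)" using move(1,2) by (simp add: algebra_simps)
    with IH(2) have "f - (p' + r') \<in> I" by (simp only:)
    moreover have "Poly_Mapping.keys r' \<subseteq> Poly_Mapping.keys r \<union> {LM M lt p}"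
      using move(2) keys_add[of r "Poly_Mapping.single (LM M lt p) (LC M lt p)"] by (auto split: if_splits)
    then have "reduced_wrt M lt G r'"
      using IH(3) move(4) unfolding reduced_wrt_def by blast
    ultimately show ?thesis by blast
  qed
  ultimately show ?case by blast
qed

lemma div_remainderD:
  fixes f :: "int^'n \<Rightarrow>\<^sub>0 'k::field"
  assumes "monomial_order (S_M M) lt" and "G \<subseteq> semialg (S_M M) - {0}"
    and "is_ideal (S_M M) I" and "G \<subseteq> I" and "f \<in> semialg (S_M M)"
    and "div_remainder M lt G f r"
  shows "f - r \<in> I" and "reduced_wrt M lt G r"
  using div_step_invariant[OF assms(1-5) assms(6)[unfolded div_remainder_def]] by simp_all

lemma sparse_GB_subset: "sparse_GB M lt G I \<Longrightarrow> G \<subseteq> I"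
  unfolding sparse_GB_def by (elim conjE)

lemma sparse_GB_dvd_delta:
  "sparse_GB M lt G I \<Longrightarrow> f \<in> I \<Longrightarrow> f \<noteq> 0 \<Longrightarrow> \<exists>g\<in>G. dvd_delta M (LM M lt g) (LM M lt f)"
  unfolding sparse_GB_def by blast

lemma reduced_remainders_eq:
  fixes r r' :: "int^'n \<Rightarrow>\<^sub>0 'k::field"
  assumes mo: "monomial_order (S_M M) lt" and I: "is_ideal (S_M M) I"
    and GB: "sparse_GB M lt G I" and GB': "sparse_GB M lt G' I"
    and reduced: "reduced_wrt M lt G r" and reduced': "reduced_wrt M lt G' r'"
    and diff: "r - r' \<in> I"
  shows "r = r'"
proof (rule ccontr)
  assume "r \<noteq> r'"
  then have nonzero: "r - r' \<noteq> 0" by simp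
  have "LM M lt (r - r') \<in> Poly_Mapping.keys r \<union> Poly_Mapping.keys r'"
    using LM_in_keys[OF mo ideal_subset_semialg[OF I diff] nonzero] keys_diff[of r r'] by blast
  moreover have "\<exists>g\<in>G. dvd_delta M (LM M lt g) (LM M lt (r - r'))"
    and "\<exists>g\<in>G'. dvd_delta M (LM M lt g) (LM M lt (r - r'))"
    using sparse_GB_dvd_delta[OF GB diff nonzero] sparse_GB_dvd_delta[OF GB' diff nonzero] .
  ultimately show False using reduced reduced' unfolding reduced_wrt_def by blast
qed

theorem mainTheorem1:
  fixes M :: "(real^'n) set" and lt :: "int^'n \<Rightarrow> int^'n \<Rightarrow> bool"
  assumes "polytope M" and "0 \<in> M"
    and "pointed (S_M M)" and "pointed (S_Mh M)"
    and "monomial_order (S_M M) lt"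
  shows "(\<forall>(f :: int^'n \<Rightarrow>\<^sub>0 'k::field_char_0) G. f \<in> semialg (S_M M) \<longrightarrow>
            G \<subseteq> semialg (S_M M) - {0} \<longrightarrow>
            \<not> (\<exists>st. st 0 = (f, 0) \<and> (\<forall>i. div_step M lt G (st i) (st (Suc i)))))
       \<and> (\<forall>(I :: (int^'n \<Rightarrow>\<^sub>0 'k) set) G G' f f' r r'.
            is_ideal (S_M M) I \<longrightarrow>
            G \<subseteq> semialg (S_M M) - {0} \<longrightarrow> G' \<subseteq> semialg (S_M M) - {0} \<longrightarrow>
            sparse_GB M lt G I \<longrightarrow> sparse_GB M lt G' I \<longrightarrow>
            f \<in> semialg (S_M M) \<longrightarrow> f' \<in> semialg (S_M M) \<longrightarrow> f - f' \<in> I \<longrightarrow>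
            div_remainder M lt G f r \<longrightarrow> div_remainder M lt G' f' r' \<longrightarrow> r = r')"
proof (intro conjI allI impI)
  note mo = assms(5)
  show "\<not> (\<exists>st. st 0 = (f, 0) \<and> (\<forall>i. div_step M lt G (st i) (st (Suc i))))"
    if "f \<in> semialg (S_M M)" and "G \<subseteq> semialg (S_M M) - {0}"
    for f :: "int^'n \<Rightarrow>\<^sub>0 'k" and G
    using div_step_terminates[OF mo that(2,1)] .
  fix I G G' f f' r r'
  assume I: "is_ideal (S_M M) I" and G: "G \<subseteq> semialg (S_M M) - {0}"
    and G': "G' \<subseteq> semialg (S_M M) - {0}"
    and GB: "sparse_GB M lt G I" and GB': "sparse_GB M lt G' I"
    and f: "f \<in> semialg (S_M M)" and f': "f' \<in> semialg (S_M M)" and ff': "f - f' \<in> I"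
    and r: "div_remainder M lt G f r" and r': "div_remainder M lt G' f' r'"
  note rem = div_remainderD[OF mo G I sparse_GB_subset[OF GB] f r]
    and rem' = div_remainderD[OF mo G' I sparse_GB_subset[OF GB'] f' r']
  have "(f - f') - (f - r) + (f' - r') \<in> I"
    using ideal_add[OF I ideal_diff[OF I S_M_zero ff' rem(1)] rem'(1)] .
  then have "r - r' \<in> I" by (simp add: algebra_simps)
  then show "r = r'" using reduced_remainders_eq[OF mo I GB GB' rem(2) rem'(2)] by blast
qed

end
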